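(* Let $1\le p\le\infty$, $E$ a Banach space, $Y$ a Banach lattice and $T:E\to Y$ a bounded linear operator. Then $T$ is positive $p$-majorizing if and only if $T$ is positive strongly $p$-summing.
   Context: $p^{\ast}$ is the conjugate exponent of $p$; for a finite family $(y_i^{\ast})$ in $Y^{\ast}$, $\|(y_i^{\ast})\|_{p^{\ast},\omega}=\sup_{y\in B_{Y}}\|(\langle y_i^{\ast},y\rangle)_i\|_{p^{\ast}}$. $T$ is positive $p$-majorizing if there is $C>0$ with $(\sum_{i=1}^n|\langle T(z_i),y_i^{\ast}\rangle|^{p^{\ast}})^{1/p^{\ast}}\le C\|(y_i^{\ast})_{i=1}^n\|_{p^{\ast},\omega}$ for all $n$, $z_i\in B_E$ and positive $y_i^{\ast}\in Y^{\ast}$. $T$ is positive strongly $p$-summing if there is $C>0$ with $\sum_{i=1}^n|\langle T(x_i),y_i^{\ast}\rangle|\le C(\sum_i\|x_i\|^p)^{1/p}\|(y_i^{\ast})_{i=1}^n\|_{p^{\ast},\omega}$ for all $n$, $x_i\in E$ and positive $y_i^{\ast}\in Y^{\ast}$. *)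

theory Defs
  imports "HOL-Analysis.Analysis"
begin

text \<open>Exponents p range over [1, \<infinity>], represented as extended reals.\<close>

definition conj_exp :: "ereal \<Rightarrow> ereal" where
  "conj_exp p = (if p = 1 then \<infinity> else if p = \<infinity> then 1
                 else ereal (real_of_ereal p / (real_of_ereal p - 1)))"

definition lq_norm :: "ereal \<Rightarrow> nat \<Rightarrow> (nat \<Rightarrow> real) \<Rightarrow> real" where
  "lq_norm q n a = (if q = \<infinity> then Max (insert 0 ((\<lambda>i. \<bar>a i\<bar>) ` {..<n}))
     else (\<Sum>i<n. \<bar>a i\<bar> powr real_of_ereal q) powr (1 / real_of_ereal q))"

definition weak_norm :: "ereal \<Rightarrow> nat \<Rightarrow> (nat \<Rightarrow> 'b::real_normed_vector \<Rightarrow> real) \<Rightarrow> real" where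
  "weak_norm q n f = (SUP y\<in>{y::'b. norm y \<le> 1}. lq_norm q n (\<lambda>i. f i y))"

text \<open>Banach lattice: a Banach space whose order makes it a vector lattice
  (ordered real vector space + lattice) with lattice norm.\<close>
definition lat_abs :: "'b::{ab_group_add, lattice} \<Rightarrow> 'b" where
  "lat_abs x = sup x (- x)"

definition banach_lattice_norm :: "'b::{banach, ordered_real_vector, lattice} itself \<Rightarrow> bool" where
  "banach_lattice_norm _ \<longleftrightarrow> (\<forall>x y::'b. lat_abs x \<le> lat_abs y \<longrightarrow> norm x \<le> norm y)"

definition pos_dual :: "('b::{real_normed_vector, order} \<Rightarrow> real) \<Rightarrow> bool" where
  "pos_dual f \<longleftrightarrow> bounded_linear f \<and> (\<forall>y. 0 \<le> y \<longrightarrow> 0 \<le> f y)"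

definition pos_p_majorizing :: "ereal \<Rightarrow> ('a::real_normed_vector \<Rightarrow> 'b::{real_normed_vector, order}) \<Rightarrow> bool" where
  "pos_p_majorizing p T \<longleftrightarrow> (\<exists>C>0. \<forall>n (z::nat \<Rightarrow> 'a) (f::nat \<Rightarrow> 'b \<Rightarrow> real).
     (\<forall>i<n. norm (z i) \<le> 1) \<longrightarrow> (\<forall>i<n. pos_dual (f i)) \<longrightarrow>
     lq_norm (conj_exp p) n (\<lambda>i. f i (T (z i))) \<le> C * weak_norm (conj_exp p) n f)"

definition pos_strongly_p_summing :: "ereal \<Rightarrow> ('a::real_normed_vector \<Rightarrow> 'b::{real_normed_vector, order}) \<Rightarrow> bool" where
  "pos_strongly_p_summing p T \<longleftrightarrow> (\<exists>C>0. \<forall>n (x::nat \<Rightarrow> 'a) (f::nat \<Rightarrow> 'b \<Rightarrow> real).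
     (\<forall>i<n. pos_dual (f i)) \<longrightarrow>
     (\<Sum>i<n. \<bar>f i (T (x i))\<bar>) \<le> C * lq_norm p n (\<lambda>i. norm (x i)) * weak_norm (conj_exp p) n f)"

end

theory Submission
  imports Defs
begin

(* Both properties are finite-dimensional duality statements between l_p and l_p*.
   Writing x_i = norm x_i *R z_i with norm z_i \<le> 1, Hoelder's inequality gives
     sum |f_i (T x_i)| \<le> |(norm x_i)_i|_p * |(f_i (T z_i))_i|_p*,
   so a majorizing bound on the second factor yields the summing bound. Conversely,
   |(b_i)|_p* = sum a_i |b_i| for some nonnegative a in the unit ball of l_p, and the
   summing bound applied to x_i = a_i *R z_i yields the majorizing bound. *)

lemma conj_exp_cases:
  assumes "1 \<le> p"
  obtains "p = 1" "conj_exp p = \<infinity>"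
  | "p = \<infinity>" "conj_exp p = 1"
  | r where "r > 1" "p = ereal r" "conj_exp p = ereal (r / (r - 1))"
proof (cases "p = 1 \<or> p = \<infinity>")
  case True
  then show ?thesis using that by (auto simp: conj_exp_def)
next
  case False
  with assms obtain r where "p = ereal r" "r > 1" by (cases p) auto
  with False show ?thesis using that(3) by (simp add: conj_exp_def)
qed

lemma conj_exp_nonneg: "1 \<le> p \<Longrightarrow> 0 \<le> conj_exp p"
  by (cases rule: conj_exp_cases) auto

lemma lq_norm_nonneg: "0 \<le> lq_norm q n a"
  unfolding lq_norm_def by (auto intro: Max_ge)

lemma lq_norm_one: "lq_norm 1 n a = (\<Sum>i<n. \<bar>a i\<bar>)"
  by (simp add: lq_norm_def)

lemma lq_norm_infinity_ge: "i < n \<Longrightarrow> \<bar>a i\<bar> \<le> lq_norm \<infinity> n a"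
  by (simp add: lq_norm_def)

lemma lq_norm_mono:
  assumes "0 \<le> q" "\<forall>i<n. \<bar>u i\<bar> \<le> \<bar>v i\<bar>"
  shows "lq_norm q n u \<le> lq_norm q n v"
proof (cases "q = \<infinity>")
  case True
  then show ?thesis using assms(2)
    by (auto simp: lq_norm_def intro: order_trans[OF _ Max_ge])
next
  case False
  have "0 \<le> real_of_ereal q" using assms(1) by (simp add: real_of_ereal_pos)
  then show ?thesis using False assms(2)
    by (auto simp: lq_norm_def intro!: powr_mono2 sum_mono sum_nonneg)
qed

lemma Holder_inequality_sum:
  fixes a b :: "'i \<Rightarrow> real"
  assumes "finite I" and rs: "r > 1" "s > 1" "1/r + 1/s = 1"
  shows "(\<Sum>i\<in>I. \<bar>a i * b i\<bar>)
    \<le> (\<Sum>i\<in>I. \<bar>a i\<bar> powr r) powr (1/r) * (\<Sum>i\<in>I. \<bar>b i\<bar> powr s) powr (1/s)"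
proof -
  define A where "A = (\<Sum>i\<in>I. \<bar>a i\<bar> powr r) powr (1/r)"
  define B where "B = (\<Sum>i\<in>I. \<bar>b i\<bar> powr s) powr (1/s)"
  have vanish: "\<forall>i\<in>I. c i = 0" if "(\<Sum>i\<in>I. \<bar>c i\<bar> powr t) powr (1/t) = 0"
    for c :: "'i \<Rightarrow> real" and t
  proof -
    have "(\<Sum>i\<in>I. \<bar>c i\<bar> powr t) = 0" using that by simp
    then show ?thesis using \<open>finite I\<close> by (simp add: sum_nonneg_eq_0_iff)
  qed
  have A_pow: "A powr r = (\<Sum>i\<in>I. \<bar>a i\<bar> powr r)"
    unfolding A_def using rs by (simp add: powr_powr sum_nonneg)
  have B_pow: "B powr s = (\<Sum>i\<in>I. \<bar>b i\<bar> powr s)"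
    unfolding B_def using rs by (simp add: powr_powr sum_nonneg)
  show ?thesis
  proof (cases "A = 0 \<or> B = 0")
    case True
    then have "(\<Sum>i\<in>I. \<bar>a i * b i\<bar>) = 0"
      using vanish[of a r, folded A_def] vanish[of b s, folded B_def] by auto
    moreover have "0 \<le> A * B" by (simp add: A_def B_def)
    ultimately show ?thesis by (simp add: A_def B_def)
  next
    case False
    then have "A > 0" "B > 0" unfolding A_def B_def by auto
    have "(\<Sum>i\<in>I. \<bar>a i\<bar> / A * (\<bar>b i\<bar> / B))
        \<le> (\<Sum>i\<in>I. (\<bar>a i\<bar> / A) powr r / r + (\<bar>b i\<bar> / B) powr s / s)"
      using rs \<open>A > 0\<close> \<open>B > 0\<close> by (intro sum_mono Youngs_inequality) auto
    also have "\<dots> = (\<Sum>i\<in>I. \<bar>a i\<bar> powr r) / A powr r / r + (\<Sum>i\<in>I. \<bar>b i\<bar> powr s) / B powr s / s"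
      by (simp add: powr_divide sum.distrib sum_divide_distrib)
    also have "\<dots> = 1"
      using \<open>A > 0\<close> \<open>B > 0\<close> rs(3) by (simp add: A_pow[symmetric] B_pow[symmetric])
    finally have "(\<Sum>i\<in>I. \<bar>a i\<bar> / A * (\<bar>b i\<bar> / B)) \<le> 1" .
    moreover have "(\<Sum>i\<in>I. \<bar>a i * b i\<bar>) = A * B * (\<Sum>i\<in>I. \<bar>a i\<bar> / A * (\<bar>b i\<bar> / B))"
      using \<open>A > 0\<close> \<open>B > 0\<close> by (simp add: sum_distrib_left abs_mult)
    ultimately have "(\<Sum>i\<in>I. \<bar>a i * b i\<bar>) \<le> A * B"
      using \<open>A > 0\<close> \<open>B > 0\<close> by (simp add: mult_left_le)
    then show ?thesis unfolding A_def B_def .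
  qed
qed

lemma lq_norm_Holder:
  assumes "1 \<le> p"
  shows "(\<Sum>i<n. \<bar>a i * b i\<bar>) \<le> lq_norm p n a * lq_norm (conj_exp p) n b"
  using assms
proof (cases rule: conj_exp_cases)
  case 1
  have "(\<Sum>i<n. \<bar>a i * b i\<bar>) \<le> (\<Sum>i<n. \<bar>a i\<bar> * lq_norm \<infinity> n b)"
    unfolding abs_mult by (intro sum_mono mult_left_mono lq_norm_infinity_ge) auto
  then show ?thesis using 1 by (simp add: lq_norm_one sum_distrib_right)
next
  case 2
  have "(\<Sum>i<n. \<bar>a i * b i\<bar>) \<le> (\<Sum>i<n. lq_norm \<infinity> n a * \<bar>b i\<bar>)"
    unfolding abs_mult by (intro sum_mono mult_right_mono lq_norm_infinity_ge) auto
  then show ?thesis using 2 by (simp add: lq_norm_one sum_distrib_left)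
next
  case (3 r)
  then have "r / (r - 1) > 1" "1 / r + 1 / (r / (r - 1)) = 1" by (simp_all add: field_simps)
  with 3 show ?thesis
    using Holder_inequality_sum[of "{..<n}" r "r / (r - 1)" a b] by (simp add: lq_norm_def)
qed

lemma lq_norm_conj_exp_attained:
  assumes "1 \<le> p"
  obtains a where "\<forall>i. 0 \<le> a i" "lq_norm p n a \<le> 1"
    "(\<Sum>i<n. a i * \<bar>b i\<bar>) = lq_norm (conj_exp p) n b"
  using assms
proof (cases rule: conj_exp_cases)
  case 1
  define M where "M = Max (insert 0 ((\<lambda>i. \<bar>b i\<bar>) ` {..<n}))"
  have "M \<in> insert 0 ((\<lambda>i. \<bar>b i\<bar>) ` {..<n})" unfolding M_def by (rule Max_in) auto
  then consider "M = 0" | j where "j < n" "M = \<bar>b j\<bar>" by auto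
  then show ?thesis
  proof cases
    case 1
    then show ?thesis using that[of "\<lambda>_. 0"] \<open>p = 1\<close> \<open>conj_exp p = \<infinity>\<close>
      by (simp add: lq_norm_def M_def)
  next
    case (2 j)
    then show ?thesis using that[of "\<lambda>i. if i = j then 1 else 0"] \<open>p = 1\<close> \<open>conj_exp p = \<infinity>\<close>
      by (simp add: lq_norm_def M_def if_distrib[of "\<lambda>x. x * _"] cong: if_cong)
  qed
next
  case 2
  then show ?thesis using that[of "\<lambda>_. 1"] by (simp add: lq_norm_def)
next
  case (3 r)
  define s where "s = r / (r - 1)"
  have "s > 1" and rs: "(s - 1) * r = s" using 3 by (simp_all add: s_def field_simps)
  define N where "N = (\<Sum>i<n. \<bar>b i\<bar> powr s) powr (1 / s)"
  have N_conj: "lq_norm (conj_exp p) n b = N" using 3 by (simp add: lq_norm_def N_def s_def)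
  have N_pow: "N powr s = (\<Sum>i<n. \<bar>b i\<bar> powr s)"
    unfolding N_def using \<open>s > 1\<close> by (simp add: powr_powr sum_nonneg)
  show ?thesis
  proof (cases "N = 0")
    case True
    then show ?thesis using that[of "\<lambda>_. 0"] N_conj 3 by (simp add: lq_norm_def)
  next
    case False
    then have "N > 0" unfolding N_def by simp
    \<comment> \<open>the extremal vector of Hoelder's inequality\<close>
    define a where "a i = (\<bar>b i\<bar> / N) powr (s - 1)" for i
    have "a i * \<bar>b i\<bar> = \<bar>b i\<bar> powr s / N powr (s - 1)" for i
      using \<open>s > 1\<close> by (cases "b i = 0") (simp_all add: a_def powr_divide powr_diff)
    then have "(\<Sum>i<n. a i * \<bar>b i\<bar>) = N powr s / N powr (s - 1)"
      by (simp add: N_pow sum_divide_distrib)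
    also have "\<dots> = N" using \<open>N > 0\<close> by (simp add: powr_diff)
    finally have pairing: "(\<Sum>i<n. a i * \<bar>b i\<bar>) = N" .
    have "\<bar>a i\<bar> powr r = \<bar>b i\<bar> powr s / N powr s" for i
      unfolding a_def by (simp add: powr_divide powr_powr rs)
    then have "(\<Sum>i<n. \<bar>a i\<bar> powr r) = 1"
      using \<open>N > 0\<close> by (simp add: sum_divide_distrib[symmetric] N_pow[symmetric])
    then have "lq_norm p n a = 1" using 3 by (simp add: lq_norm_def)
    then show ?thesis using that[of a] pairing N_conj by (simp add: a_def)
  qed
qed

lemma weak_norm_nonneg:
  assumes "\<forall>i<n. bounded_linear (f i)" "0 \<le> q"
  shows "0 \<le> weak_norm q n f"
proof -
  \<comment> \<open>Sup over a set that is not bounded above is junk, so boundedness must be shown first.\<close>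
  define L where "L = (\<Sum>i<n. onorm (f i))"
  have "lq_norm q n (\<lambda>i. f i y) \<le> lq_norm q n (\<lambda>_. L)" if "norm y \<le> 1" for y
  proof (rule lq_norm_mono[OF assms(2)], intro allI impI)
    fix i assume "i < n"
    then have "bounded_linear (f i)" using assms(1) by blast
    then have "\<bar>f i y\<bar> \<le> onorm (f i)"
      using onorm[of "f i" y] onorm_pos_le[of "f i"] that mult_left_le[of "norm y" "onorm (f i)"]
      by simp
    also have "\<dots> \<le> L"
      unfolding L_def using \<open>i < n\<close> assms(1)
      by (intro member_le_sum) (auto intro: onorm_pos_le)
    finally show "\<bar>f i y\<bar> \<le> \<bar>L\<bar>" by simp
  qed
  then have bdd: "bdd_above ((\<lambda>y. lq_norm q n (\<lambda>i. f i y)) ` {y. norm y \<le> 1})"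
    by (intro bdd_aboveI2) auto
  have "lq_norm q n (\<lambda>i. f i 0) \<le> weak_norm q n f"
    unfolding weak_norm_def by (rule cSUP_upper[OF _ bdd]) simp
  then show ?thesis using lq_norm_nonneg order_trans by blast
qed

lemma pos_dual_linear: "pos_dual f \<Longrightarrow> linear f"
  by (simp add: pos_dual_def bounded_linear.linear)

lemma pos_p_majorizing_imp_pos_strongly_p_summing:
  assumes "1 \<le> p" "linear T" "pos_p_majorizing p T"
  shows "pos_strongly_p_summing p T"
proof -
  obtain C where "C > 0" and majorizing: "\<And>n z f. \<forall>i<n. norm (z i) \<le> 1 \<Longrightarrow>
      \<forall>i<n. pos_dual (f i) \<Longrightarrow>
      lq_norm (conj_exp p) n (\<lambda>i. f i (T (z i))) \<le> C * weak_norm (conj_exp p) n f"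
    using assms(3) unfolding pos_p_majorizing_def by blast
  have "(\<Sum>i<n. \<bar>f i (T (x i))\<bar>)
      \<le> C * lq_norm p n (\<lambda>i. norm (x i)) * weak_norm (conj_exp p) n f"
    if f: "\<forall>i<n. pos_dual (f i)" for n x f
  proof -
    define z where "z i = sgn (x i)" for i
    have "f i (T (x i)) = norm (x i) * f i (T (z i))" if "i < n" for i
    proof -
      have "linear (f i)" using f \<open>i < n\<close> pos_dual_linear by blast
      moreover have "x i = norm (x i) *\<^sub>R z i"
        by (cases "x i = 0") (simp_all add: z_def sgn_div_norm)
      ultimately have "f i (T (x i)) = f i (norm (x i) *\<^sub>R T (z i))"
        using assms(2) by (metis linear_scale)
      with \<open>linear (f i)\<close> show ?thesis by (simp add: linear_scale)
    qed
    then have "(\<Sum>i<n. \<bar>f i (T (x i))\<bar>) = (\<Sum>i<n. \<bar>norm (x i) * f i (T (z i))\<bar>)"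
      by simp
    also have "\<dots> \<le> lq_norm p n (\<lambda>i. norm (x i)) * lq_norm (conj_exp p) n (\<lambda>i. f i (T (z i)))"
      using assms(1) by (rule lq_norm_Holder)
    also have "\<dots> \<le> lq_norm p n (\<lambda>i. norm (x i)) * (C * weak_norm (conj_exp p) n f)"
    proof -
      have "\<forall>i<n. norm (z i) \<le> 1" by (simp add: z_def norm_sgn)
      from majorizing[OF this f] show ?thesis by (intro mult_left_mono lq_norm_nonneg)
    qed
    finally show ?thesis by (simp add: algebra_simps)
  qed
  with \<open>C > 0\<close> show ?thesis unfolding pos_strongly_p_summing_def by blast
qed

lemma pos_strongly_p_summing_imp_pos_p_majorizing:
  assumes "1 \<le> p" "linear T" "pos_strongly_p_summing p T"
  shows "pos_p_majorizing p T"
proof -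
  obtain C where "C > 0" and summing: "\<And>n x f. \<forall>i<n. pos_dual (f i) \<Longrightarrow>
      (\<Sum>i<n. \<bar>f i (T (x i))\<bar>) \<le> C * lq_norm p n (\<lambda>i. norm (x i)) * weak_norm (conj_exp p) n f"
    using assms(3) unfolding pos_strongly_p_summing_def by blast
  have "lq_norm (conj_exp p) n (\<lambda>i. f i (T (z i))) \<le> C * weak_norm (conj_exp p) n f"
    if z: "\<forall>i<n. norm (z i) \<le> 1" and f: "\<forall>i<n. pos_dual (f i)" for n z f
  proof -
    obtain a where a_nonneg: "\<forall>i. 0 \<le> a i" and a_norm: "lq_norm p n a \<le> 1"
      and pairing: "(\<Sum>i<n. a i * \<bar>f i (T (z i))\<bar>) = lq_norm (conj_exp p) n (\<lambda>i. f i (T (z i)))"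
      by (rule lq_norm_conj_exp_attained[OF assms(1)])
    define x where "x i = a i *\<^sub>R z i" for i
    have "a i * \<bar>f i (T (z i))\<bar> = \<bar>f i (T (x i))\<bar>" if "i < n" for i
    proof -
      have "linear (f i)" using f \<open>i < n\<close> pos_dual_linear by blast
      with assms(2) have "f i (T (x i)) = a i * f i (T (z i))" by (simp add: x_def linear_scale)
      then show ?thesis using a_nonneg by (simp add: abs_mult)
    qed
    then have "lq_norm (conj_exp p) n (\<lambda>i. f i (T (z i))) = (\<Sum>i<n. \<bar>f i (T (x i))\<bar>)"
      unfolding pairing[symmetric] by (intro sum.cong) auto
    also have "\<dots> \<le> C * lq_norm p n (\<lambda>i. norm (x i)) * weak_norm (conj_exp p) n f"
      using f by (rule summing)
    also have "\<dots> \<le> C * 1 * weak_norm (conj_exp p) n f"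
    proof -
      have "0 \<le> p" using assms(1) by (cases p) auto
      then have "lq_norm p n (\<lambda>i. norm (x i)) \<le> lq_norm p n a"
        using z by (intro lq_norm_mono) (auto simp: x_def mult_left_le)
      moreover have "0 \<le> weak_norm (conj_exp p) n f"
        using f conj_exp_nonneg[OF assms(1)]
        by (intro weak_norm_nonneg) (auto simp: pos_dual_def)
      ultimately show ?thesis
        using a_norm \<open>C > 0\<close> by (intro mult_right_mono mult_left_mono) auto
    qed
    finally show ?thesis by simp
  qed
  with \<open>C > 0\<close> show ?thesis unfolding pos_p_majorizing_def by blast
qed

theorem corollary3p6:
  fixes p :: ereal and T :: "'a::banach \<Rightarrow> 'b::{banach, ordered_real_vector, lattice}"
  assumes "1 \<le> p"
    and "banach_lattice_norm TYPE('b)"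
    and "bounded_linear T"
  shows "pos_p_majorizing p T \<longleftrightarrow> pos_strongly_p_summing p T"
proof -
  have "linear T" using assms(3) by (rule bounded_linear.linear)
  then show ?thesis
    using pos_p_majorizing_imp_pos_strongly_p_summing[OF assms(1)]
      pos_strongly_p_summing_imp_pos_p_majorizing[OF assms(1)]
    by blast
qed

end
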